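(* Let $H$ be a maximal isotropy subgroup of the $G\times S^1$-action on $V_0$, let $N:=N(H)/H$ (with $N(H)$ the normalizer of $H$ in $G\times S^1$) and let $N^0$ be the identity component of $N$. Then either (i) $N^0\cong S^1$ and $N/N^0$ is trivial or isomorphic to $\mathbb{Z}_2$ (then $H$ is called maximal complex), or (ii) $N^0\cong SU(2)$ and $N\cong SU(2)$ (then $H$ is called maximal quaternionic).
   Context: Let $G$ be a compact Lie group and $V_0$ a real $2n$-dimensional representation of $G\times S^1$ in which the $S^1$ factor acts by $\theta\mapsto e^{\theta\mathbb{J}_{2n}}$ (with $\mathbb{J}_{2n}=\begin{pmatrix}0&-\mathbb{I}_n\\ \mathbb{I}_n&0\end{pmatrix}$, i.e. scalar multiplication by $e^{i\theta}$ for the complex structure $\mathbb{J}_{2n}$), the $G$-action commutes with $\mathbb{J}_{2n}$, and $G\times S^1$ acts complex-irreducibly on $V_0$. (This is the representation on the subspace $V_0$ of the resonance space arising in a $G$-symmetric Hamiltonian Hopf bifurcation under the genericity hypothesis that the resonance space splits into two complex-dual $G\times S^1$-irreducible subspaces.) An isotropy subgroup is the stabilizer of some point of $V_0$; it is maximal if it is maximal among proper isotropy subgroups (those different from $G\times S^1$). *)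

theory Defs
  imports "HOL-Analysis.Analysis" "HOL-Algebra.Group_Action" "HOL-Algebra.Elementary_Groups"
begin

text \<open>A compact Lie group G is modelled as a compact subgroup of GL(m,R), i.e. a set of
  real m x m matrices forming a group under matrix multiplication.\<close>
definition matgrp :: "(real^'m^'m) set \<Rightarrow> (real^'m^'m) monoid" where
  "matgrp G = \<lparr>carrier = G, monoid.mult = (\<lambda>A B. A ** B), one = mat 1\<rparr>"

definition circle_group :: "complex monoid" where
  "circle_group = \<lparr>carrier = sphere 0 1, monoid.mult = (*), one = 1\<rparr>"

definition GxS1 :: "(real^'m^'m) set \<Rightarrow> ((real^'m^'m) \<times> complex) monoid" where
  "GxS1 G = \<lparr>carrier = G \<times> sphere 0 1,
             monoid.mult = (\<lambda>(a,z) (b,w). (a ** b, z * w)), one = (mat 1, 1)\<rparr>"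

text \<open>Action of (g,z) on V_0 = C^n: the S^1 factor acts by scalar multiplication with z = e^{i theta},
  which under R^{2n} = C^n is exactly e^{theta J_{2n}}; G acts complex-linearly through rho.\<close>
definition act :: "(real^'m^'m \<Rightarrow> complex^'n^'n) \<Rightarrow> ((real^'m^'m) \<times> complex) \<Rightarrow> complex^'n \<Rightarrow> complex^'n" where
  "act \<rho> gz v = snd gz *s (\<rho> (fst gz) *v v)"

definition isotropy :: "(real^'m^'m) set \<Rightarrow> (real^'m^'m \<Rightarrow> complex^'n^'n) \<Rightarrow> complex^'n
    \<Rightarrow> ((real^'m^'m) \<times> complex) set" where
  "isotropy G \<rho> v = {gz \<in> carrier (GxS1 G). act \<rho> gz v = v}"

definition is_isotropy_subgroup where
  "is_isotropy_subgroup G \<rho> H \<longleftrightarrow> (\<exists>v. H = isotropy G \<rho> v)"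

definition is_maximal_isotropy_subgroup where
  "is_maximal_isotropy_subgroup G \<rho> H \<longleftrightarrow>
     is_isotropy_subgroup G \<rho> H \<and> H \<noteq> carrier (GxS1 G) \<and>
     (\<forall>K. is_isotropy_subgroup G \<rho> K \<and> K \<noteq> carrier (GxS1 G) \<and> H \<subseteq> K \<longrightarrow> K = H)"

definition complex_irreducible where
  "complex_irreducible G (\<rho> :: real^'m^'m \<Rightarrow> complex^'n^'n) \<longleftrightarrow>
     (\<forall>W. vec.subspace W \<and> (\<forall>gz\<in>carrier (GxS1 G). \<forall>v\<in>W. act \<rho> gz v \<in> W)
          \<longrightarrow> W = {0} \<or> W = UNIV)"

definition quotient_topology :: "'a topology \<Rightarrow> ('a \<Rightarrow> 'b) \<Rightarrow> 'b set \<Rightarrow> 'b topology" where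
  "quotient_topology X q Q = topology (\<lambda>U. U \<subseteq> Q \<and> openin X {x \<in> topspace X. q x \<in> U})"

lemma istopology_quotient:
  "istopology (\<lambda>U. U \<subseteq> Q \<and> openin X {x \<in> topspace X. q x \<in> U})"
proof -
  have int: "{x \<in> topspace X. q x \<in> S \<inter> T} =
             {x \<in> topspace X. q x \<in> S} \<inter> {x \<in> topspace X. q x \<in> T}" for S T by auto
  have un: "{x \<in> topspace X. q x \<in> \<Union>K} = \<Union>((\<lambda>S. {x \<in> topspace X. q x \<in> S}) ` K)" for K by auto
  show ?thesis unfolding istopology_def
  proof (rule conjI; intro allI impI)
    fix S T
    assume "S \<subseteq> Q \<and> openin X {x \<in> topspace X. q x \<in> S}"
                   and "T \<subseteq> Q \<and> openin X {x \<in> topspace X. q x \<in> T}"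
    then show "S \<inter> T \<subseteq> Q \<and> openin X {x \<in> topspace X. q x \<in> S \<inter> T}"
      unfolding int by auto
  next
    fix K assume "\<forall>S\<in>K. S \<subseteq> Q \<and> openin X {x \<in> topspace X. q x \<in> S}"
    then show "\<Union>K \<subseteq> Q \<and> openin X {x \<in> topspace X. q x \<in> \<Union>K}"
      unfolding un by (auto intro!: openin_Union)
  qed
qed

definition circle_top :: "complex topology" where
  "circle_top = subtopology euclidean (sphere 0 1)"

definition conj_transpose :: "complex^'n^'k \<Rightarrow> complex^'k^'n" where
  "conj_transpose A = (\<chi> i j. cnj (A $ j $ i))"

definition SU2 :: "(complex^2^2) set" where
  "SU2 = {A. A ** conj_transpose A = mat 1 \<and> det A = 1}"

definition SU2_group :: "(complex^2^2) monoid" where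
  "SU2_group = \<lparr>carrier = SU2, monoid.mult = (\<lambda>A B. A ** B), one = mat 1\<rparr>"

definition SU2_top :: "(complex^2^2) topology" where
  "SU2_top = subtopology euclidean SU2"

definition top_group_iso where
  "top_group_iso X G Y K f \<longleftrightarrow> f \<in> iso G K \<and> homeomorphic_map X Y f"

definition NH_group where
  "NH_group G H = (GxS1 G)\<lparr>carrier := normalizer (GxS1 G) H\<rparr>"

definition NmodH where
  "NmodH G H = NH_group G H Mod H"

definition NmodH_top where
  "NmodH_top G H = quotient_topology (subtopology euclidean (normalizer (GxS1 G) H))
                      (\<lambda>x. H #>\<^bsub>NH_group G H\<^esub> x) (carrier (NmodH G H))"

text \<open>Identity component N^0 of N = N(H)/H (the identity of N is the coset H).\<close>
definition N0 where
  "N0 G H = connected_component_of_set (NmodH_top G H) H"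

end

theory Submission
  imports Defs "HOL-Computational_Algebra.Fundamental_Theorem_Algebra"
    "HOL-Algebra.Zassenhaus" "HOL-Algebra.Generated_Groups"
begin

(* Every nonzero vector w of the fixed space Fix(H) has isotropy group exactly H, by maximality.
   An element x of N(H) preserves Fix(H), so it has an eigenvector w there, and its eigenvalue m
   has modulus 1 because the orbits of the compact group G x S^1 are bounded.  Then x (1,m)^-1
   fixes w, hence lies in H: thus N(H) = H S^1, and c |-> H (1,c) is a group isomorphism from S^1
   onto N(H)/H.  It is a homeomorphism for the quotient topology, its inverse being induced by
   the continuous map sending x to the scalar by which it acts on v0.  Hence N = N^0 is
   isomorphic to S^1 and alternative (i) always holds: as G acts complex-linearly, the
   quaternionic case cannot occur, and complex irreducibility is not needed. *)

definition poly_apply :: "('a::field^'n \<Rightarrow> 'a^'n) \<Rightarrow> 'a poly \<Rightarrow> 'a^'n \<Rightarrow> 'a^'n" where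
  "poly_apply f p u = (\<Sum>i\<le>degree p. coeff p i *s (f ^^ i) u)"

lemma poly_apply_eq_sum_atMost:
  "degree p \<le> n \<Longrightarrow> poly_apply f p u = (\<Sum>i\<le>n. coeff p i *s (f ^^ i) u)"
  unfolding poly_apply_def by (rule sum.mono_neutral_left) (auto simp: coeff_eq_0)

lemma poly_apply_add: "poly_apply f (p + q) u = poly_apply f p u + poly_apply f q u"
proof -
  let ?n = "max (degree p) (degree q)"
  have "poly_apply f (p + q) u = (\<Sum>i\<le>?n. coeff (p + q) i *s (f ^^ i) u)"
    by (rule poly_apply_eq_sum_atMost) (simp add: degree_add_le)
  also have "\<dots> = (\<Sum>i\<le>?n. coeff p i *s (f ^^ i) u) + (\<Sum>i\<le>?n. coeff q i *s (f ^^ i) u)"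
    by (simp add: vector_sadd_rdistrib sum.distrib)
  also have "\<dots> = poly_apply f p u + poly_apply f q u"
    by (simp only: poly_apply_eq_sum_atMost[of p ?n] poly_apply_eq_sum_atMost[of q ?n]
        max.cobounded1 max.cobounded2)
  finally show ?thesis .
qed

lemma poly_apply_diff: "poly_apply f (p - q) u = poly_apply f p u - poly_apply f q u"
  using poly_apply_add[of f "p - q" q u] by simp

lemma poly_apply_smult: "poly_apply f (smult c p) u = c *s poly_apply f p u"
proof -
  have "poly_apply f (smult c p) u = (\<Sum>i\<le>degree p. coeff (smult c p) i *s (f ^^ i) u)"
    by (rule poly_apply_eq_sum_atMost) (simp add: degree_smult_le)
  then show ?thesis
    by (simp add: poly_apply_def vec_eq_iff sum_distrib_left mult.assoc)
qed

lemma poly_apply_monom: "poly_apply f (monom c i) u = c *s (f ^^ i) u"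
proof -
  have "poly_apply f (monom c i) u = (\<Sum>j\<le>i. coeff (monom c i) j *s (f ^^ j) u)"
    by (rule poly_apply_eq_sum_atMost) (simp add: degree_monom_le)
  also have "\<dots> = (\<Sum>j\<le>i. if j = i then c *s (f ^^ i) u else 0)"
    by (intro sum.cong) (auto simp: coeff_monom)
  finally show ?thesis by simp
qed

lemma poly_apply_0 [simp]: "poly_apply f 0 u = 0"
  by (simp add: poly_apply_def)

lemma poly_apply_sum: "poly_apply f (\<Sum>i\<in>A. p i) u = (\<Sum>i\<in>A. poly_apply f (p i) u)"
  by (induction A rule: infinite_finite_induct) (simp_all add: poly_apply_add)

lemma poly_apply_pCons_0:
  assumes "Vector_Spaces.linear (*s) (*s) f"
  shows "poly_apply f (pCons 0 p) u = f (poly_apply f p u)"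
proof -
  have "poly_apply f (pCons 0 p) u = (\<Sum>i\<le>Suc (degree p). coeff (pCons 0 p) i *s (f ^^ i) u)"
    by (rule poly_apply_eq_sum_atMost) (simp add: degree_pCons_le)
  also have "\<dots> = (\<Sum>i\<le>degree p. coeff p i *s f ((f ^^ i) u))"
    by (subst sum.atMost_Suc_shift) simp
  also have "\<dots> = f (poly_apply f p u)"
    by (simp add: poly_apply_def vec.linear_sum[OF assms] vec.linear_scale[OF assms])
  finally show ?thesis .
qed

lemma poly_apply_linear_factor:
  assumes "Vector_Spaces.linear (*s) (*s) f"
  shows "poly_apply f ([:-m, 1:] * p) u = f (poly_apply f p u) - m *s poly_apply f p u"
proof -
  have "[:-m, 1:] * p = smult (-m) p + pCons 0 p" by simp
  then show ?thesis
    by (simp only: poly_apply_add poly_apply_smult poly_apply_pCons_0[OF assms])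
      (simp add: vec_eq_iff)
qed

lemma poly_apply_in_subspace:
  assumes "vec.subspace S" "f ` S \<subseteq> S" "u \<in> S"
  shows "poly_apply f p u \<in> S"
proof -
  have "(f ^^ i) u \<in> S" for i by (induction i) (use assms in auto)
  then show ?thesis
    unfolding poly_apply_def by (intro vec.subspace_sum vec.subspace_scale assms(1))
qed

lemma exists_annihilating_poly:
  fixes f :: "'a::field^'n \<Rightarrow> 'a^'n"
  shows "\<exists>p. p \<noteq> 0 \<and> poly_apply f p u = 0"
proof (cases "inj_on (\<lambda>i. (f ^^ i) u) {..CARD('n)}")
  case False
  then obtain i j where ij: "i \<noteq> j" "(f ^^ i) u = (f ^^ j) u"
    unfolding inj_on_def by blast
  let ?p = "monom 1 i - monom 1 j :: 'a poly"
  have "coeff ?p i \<noteq> 0" using ij(1) by simp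
  then have "?p \<noteq> 0" by (intro notI) (simp only: coeff_0 simp_thms)
  moreover have "poly_apply f ?p u = 0"
    using ij(2) by (simp add: poly_apply_diff poly_apply_monom)
  ultimately show ?thesis by blast
next
  case True
  define T where "T = (\<lambda>i. (f ^^ i) u) ` {..CARD('n)}"
  have "card T = Suc CARD('n)" unfolding T_def using card_image[OF True] by simp
  moreover have "vec.dim T \<le> CARD('n)"
    using vec.dim_subset_UNIV[of T] by (simp add: vec.dimension_def card_cart_basis)
  ultimately have "vec.dependent T" by (intro vec.dependent_biggerset_general) simp
  then obtain c where c: "\<exists>v\<in>T. c v \<noteq> 0" "(\<Sum>v\<in>T. c v *s v) = 0"
    using vec.dependent_finite[of T] by (auto simp: T_def)
  define p where "p = (\<Sum>i\<le>CARD('n). monom (c ((f ^^ i) u)) i)"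
  have coeff_p: "coeff p i = c ((f ^^ i) u)" if "i \<le> CARD('n)" for i
    using that by (simp add: p_def coeff_sum coeff_monom)
  obtain i where "i \<le> CARD('n)" "c ((f ^^ i) u) \<noteq> 0" using c(1) unfolding T_def by blast
  then have "p \<noteq> 0" using coeff_p by force
  moreover have "poly_apply f p u = (\<Sum>v\<in>T. c v *s v)"
    unfolding p_def poly_apply_sum poly_apply_monom T_def by (simp add: sum.reindex[OF True])
  ultimately show ?thesis using c(2) by auto
qed

lemma exists_eigenvector_in_invariant_subspace:
  fixes f :: "complex^'n \<Rightarrow> complex^'n"
  assumes f: "Vector_Spaces.linear (*s) (*s) f"
    and S: "vec.subspace S" "f ` S \<subseteq> S" and "S \<noteq> {0}"
  shows "\<exists>w\<in>S. w \<noteq> 0 \<and> (\<exists>m. f w = m *s w)"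
proof -
  obtain u where u: "u \<in> S" "u \<noteq> 0" using \<open>S \<noteq> {0}\<close> vec.subspace_0[OF S(1)] by blast
  \<comment> \<open>Split off a root \<open>m\<close> of \<open>p = (X - m) q\<close>: either \<open>q\<close> still annihilates \<open>u\<close>, or \<open>q(f) u\<close>
    is an eigenvector for \<open>m\<close>.\<close>
  have "?thesis" if "p \<noteq> 0" "poly_apply f p u = 0" for p
    using that
  proof (induction "degree p" arbitrary: p rule: less_induct)
    case less
    show ?case
    proof (cases "degree p = 0")
      case True
      then obtain a where "p = [:a:]" "a \<noteq> 0" using less.prems by (metis degree_eq_zeroE pCons_eq_0_iff)
      then have "a *s u = 0" using less.prems by (simp add: poly_apply_def)
      with \<open>a \<noteq> 0\<close> u(2) show ?thesis by (simp add: vec_eq_iff)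
    next
      case False
      then obtain m where "poly p m = 0"
        by (metis constant_degree fundamental_theorem_of_algebra)
      then obtain q where pq: "p = [:-m, 1:] * q" by (auto simp: poly_eq_0_iff_dvd elim: dvdE)
      with less.prems have "q \<noteq> 0" by auto
      then have "degree p = degree [:-m, 1:] + degree q"
        unfolding pq by (intro degree_mult_eq) auto
      then have deg_q: "degree q < degree p" by simp
      show ?thesis
      proof (cases "poly_apply f q u = 0")
        case True
        with less.hyps[OF deg_q] \<open>q \<noteq> 0\<close> show ?thesis by blast
      next
        case False
        have "f (poly_apply f q u) - m *s poly_apply f q u = 0"
          using less.prems(2) by (simp only: pq poly_apply_linear_factor[OF f])
        then have "f (poly_apply f q u) = m *s poly_apply f q u" by simp
        with False poly_apply_in_subspace[OF S u(1)] show ?thesis by blast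
      qed
    qed
  qed
  with exists_annihilating_poly show ?thesis by blast
qed

lemma group_circle_group: "group circle_group"
proof (rule groupI)
  fix z assume "z \<in> carrier circle_group"
  then have "cnj z \<in> carrier circle_group \<and> cnj z * z = 1"
    by (auto simp: circle_group_def) (metis complex_norm_square mult.commute of_real_1 power_one)
  then show "\<exists>y\<in>carrier circle_group. y \<otimes>\<^bsub>circle_group\<^esub> z = \<one>\<^bsub>circle_group\<^esub>"
    by (auto simp: circle_group_def)
qed (auto simp: circle_group_def norm_mult)

lemma (in group) central_in_normalizer:
  assumes g: "g \<in> carrier G" and central: "\<And>x. x \<in> carrier G \<Longrightarrow> g \<otimes> x = x \<otimes> g"
    and H: "H \<subseteq> carrier G"
  shows "g \<in> normalizer G H"
proof -
  have "g \<otimes> h \<otimes> inv g = h" if "h \<in> H" for h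
    using that H g by (simp add: central subsetD m_assoc)
  then have "(g <# H) #> inv g = H"
    unfolding l_coset_def r_coset_def by force
  with g H show ?thesis
    unfolding normalizer_def stabilizer_def by simp
qed

lemma (in group) trivial_group_Mod_carrier: "trivial_group (G Mod carrier G)"
proof -
  have "carrier (G Mod carrier G) = {carrier G}"
    using coset_join2[OF _ subgroup_self] by (auto simp: carrier_FactGroup)
  then show ?thesis
    using group.trivial_group[OF normal.factorgroup_is_group[OF normal_self]] by blast
qed

lemma openin_quotient_topology:
  "openin (quotient_topology X q Q) U \<longleftrightarrow> U \<subseteq> Q \<and> openin X {x \<in> topspace X. q x \<in> U}"
  unfolding quotient_topology_def by (simp only: topology_inverse'[OF istopology_quotient])

lemma topspace_quotient_topology:
  assumes "q ` topspace X \<subseteq> Q"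
  shows "topspace (quotient_topology X q Q) = Q"
proof
  have "{x \<in> topspace X. q x \<in> Q} = topspace X" using assms by auto
  then have "openin (quotient_topology X q Q) Q" by (simp add: openin_quotient_topology)
  then show "Q \<subseteq> topspace (quotient_topology X q Q)" by (rule openin_subset)
  show "topspace (quotient_topology X q Q) \<subseteq> Q"
    using openin_quotient_topology[of X q Q "topspace (quotient_topology X q Q)"] by simp
qed

lemma homeomorphic_map_onto_quotient_topology:
  assumes s: "continuous_map Y X s" and r: "continuous_map X Y r"
    and qs: "\<And>y. y \<in> topspace Y \<Longrightarrow> q (s y) = f y"
    and qr: "\<And>x. x \<in> topspace X \<Longrightarrow> q x = f (r x)"
    and inj: "inj_on f (topspace Y)"
  shows "homeomorphic_map Y (quotient_topology X q (f ` topspace Y)) f"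
proof -
  let ?Q = "f ` topspace Y"
  have r_in: "r x \<in> topspace Y" if "x \<in> topspace X" for x
    using r that by (simp add: continuous_map_def Pi_iff)
  have s_in: "s y \<in> topspace X" if "y \<in> topspace Y" for y
    using s that by (simp add: continuous_map_def Pi_iff)
  have top: "topspace (quotient_topology X q ?Q) = ?Q"
    by (rule topspace_quotient_topology) (use qr r_in in auto)
  have "continuous_map Y (quotient_topology X q ?Q) f"
    unfolding continuous_map_def
  proof (intro conjI allI impI)
    show "f \<in> topspace Y \<rightarrow> topspace (quotient_topology X q ?Q)" by (simp add: top)
    fix U assume "openin (quotient_topology X q ?Q) U"
    then have "openin X {x \<in> topspace X. q x \<in> U}" by (simp add: openin_quotient_topology)
    from openin_continuous_map_preimage[OF s this]
    show "openin Y {y \<in> topspace Y. f y \<in> U}"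
      by (rule back_subst[of "openin Y"]) (auto simp: s_in qs)
  qed
  moreover have "open_map Y (quotient_topology X q ?Q) f"
    unfolding open_map_def
  proof (intro allI impI)
    fix V assume V: "openin Y V"
    have "q x \<in> f ` V \<longleftrightarrow> r x \<in> V" if "x \<in> topspace X" for x
      using inj_on_image_mem_iff[OF inj r_in[OF that] openin_subset[OF V]] by (simp add: qr that)
    then have "{x \<in> topspace X. q x \<in> f ` V} = {x \<in> topspace X. r x \<in> V}" by auto
    with openin_continuous_map_preimage[OF r V] openin_subset[OF V]
    show "openin (quotient_topology X q ?Q) (f ` V)"
      by (auto simp: openin_quotient_topology)
  qed
  ultimately show ?thesis
    using inj by (intro bijective_open_imp_homeomorphic_map) (simp_all add: top)
qed

locale GxS1_rep =
  fixes G :: "(real^'m^'m) set" and \<rho> :: "real^'m^'m \<Rightarrow> complex^'n^'n"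
  assumes group_G: "group (matgrp G)"
    and \<rho>_one: "\<rho> (mat 1) = mat 1"
    and \<rho>_mult: "\<And>A B. A \<in> G \<Longrightarrow> B \<in> G \<Longrightarrow> \<rho> (A ** B) = \<rho> A ** \<rho> B"
begin

abbreviation \<Gamma> where "\<Gamma> \<equiv> GxS1 G"

lemma carrier_\<Gamma>: "carrier \<Gamma> = G \<times> sphere 0 1"
  by (simp add: GxS1_def)

lemma mult_\<Gamma>: "x \<otimes>\<^bsub>\<Gamma>\<^esub> y = (fst x ** fst y, snd x * snd y)"
  by (simp add: GxS1_def case_prod_beta)

lemma one_\<Gamma>: "\<one>\<^bsub>\<Gamma>\<^esub> = (mat 1, 1)"
  by (simp add: GxS1_def)

sublocale \<Gamma>: group \<Gamma>
proof -
  have "\<Gamma> = matgrp G \<times>\<times> circle_group"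
    by (simp add: GxS1_def DirProd_def matgrp_def circle_group_def)
  then show "group \<Gamma>" by (simp add: DirProd_group group_G group_circle_group)
qed

lemma mat_1_in_G: "mat 1 \<in> G"
  using monoid.one_closed[OF group.is_monoid[OF group_G]] by (simp add: matgrp_def)

lemma scalar_in_carrier: "c \<in> sphere 0 1 \<Longrightarrow> (mat 1, c) \<in> carrier \<Gamma>"
  by (simp add: carrier_\<Gamma> mat_1_in_G)

lemma act_mult:
  "x \<in> carrier \<Gamma> \<Longrightarrow> y \<in> carrier \<Gamma> \<Longrightarrow> act \<rho> (x \<otimes>\<^bsub>\<Gamma>\<^esub> y) w = act \<rho> x (act \<rho> y w)"
  by (auto simp: act_def mult_\<Gamma> carrier_\<Gamma> \<rho>_mult vector_scalar_commute matrix_vector_mul_assoc)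

lemma act_one: "act \<rho> \<one>\<^bsub>\<Gamma>\<^esub> w = w"
  by (simp add: act_def one_\<Gamma> \<rho>_one)

lemma act_inv_act: "x \<in> carrier \<Gamma> \<Longrightarrow> act \<rho> (inv\<^bsub>\<Gamma>\<^esub> x) (act \<rho> x w) = w"
  by (metis act_mult act_one \<Gamma>.l_inv \<Gamma>.inv_closed)

lemma act_scalar: "act \<rho> (mat 1, c) w = c *s w"
  by (simp add: act_def \<rho>_one)

lemma linear_act: "Vector_Spaces.linear (*s) (*s) (act \<rho> x)"
  by (simp add: Vector_Spaces.linear_iff vec.vector_space_axioms act_def vector_scalar_commute
      matrix_vector_right_distrib vector_add_ldistrib)

lemma subgroup_isotropy: "subgroup (isotropy G \<rho> w) \<Gamma>"
proof (rule \<Gamma>.subgroupI)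
  show "isotropy G \<rho> w \<subseteq> carrier \<Gamma>" by (auto simp: isotropy_def)
  have "(mat 1, 1) \<in> isotropy G \<rho> w"
    using scalar_in_carrier[of 1] by (simp add: isotropy_def act_scalar)
  then show "isotropy G \<rho> w \<noteq> {}" by blast
  fix a b assume "a \<in> isotropy G \<rho> w" "b \<in> isotropy G \<rho> w"
  then show "inv\<^bsub>\<Gamma>\<^esub> a \<in> isotropy G \<rho> w" "a \<otimes>\<^bsub>\<Gamma>\<^esub> b \<in> isotropy G \<rho> w"
    by (auto simp: isotropy_def act_mult dest: act_inv_act[of a w])
qed

lemma isotropy_0: "isotropy G \<rho> 0 = carrier \<Gamma>"
  by (auto simp: isotropy_def act_def)

lemma isotropy_ne_carrier:
  assumes "w \<noteq> 0" shows "isotropy G \<rho> w \<noteq> carrier \<Gamma>"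
proof
  assume "isotropy G \<rho> w = carrier \<Gamma>"
  then have "(mat 1, -1) \<in> isotropy G \<rho> w" using scalar_in_carrier[of "-1"] by simp
  then have "(-1) *s w = w" by (simp add: isotropy_def act_scalar)
  with assms show False by (auto simp: vec_eq_iff)
qed

lemma scalar_in_normalizer: "c \<in> sphere 0 1 \<Longrightarrow> K \<subseteq> carrier \<Gamma> \<Longrightarrow> (mat 1, c) \<in> normalizer \<Gamma> K"
  by (intro \<Gamma>.central_in_normalizer scalar_in_carrier) (simp_all add: mult_\<Gamma>)

end

locale compact_GxS1_rep = GxS1_rep +
  assumes compact_G: "compact G" and continuous_\<rho>: "continuous_on G \<rho>"
begin

lemma continuous_on_act_component: "continuous_on (carrier \<Gamma>) (\<lambda>y. act \<rho> y w $ k)"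
proof -
  have "continuous_on (G \<times> sphere 0 1) (\<lambda>y. \<rho> (fst y))"
    by (rule continuous_on_compose2[OF continuous_\<rho> continuous_on_fst]) (auto intro: continuous_on_id)
  then show ?thesis
    unfolding act_def matrix_vector_mult_def carrier_\<Gamma> by (auto intro!: continuous_intros)
qed

lemma bounded_act_component: "\<exists>C. \<forall>y\<in>carrier \<Gamma>. cmod (act \<rho> y w $ k) \<le> C"
proof -
  have "compact (carrier \<Gamma>)"
    by (simp add: carrier_\<Gamma> compact_G compact_Times)
  then have "bounded ((\<lambda>y. act \<rho> y w $ k) ` carrier \<Gamma>)"
    by (intro compact_imp_bounded compact_continuous_image continuous_on_act_component)
  then show ?thesis by (auto simp: bounded_iff)
qed

lemma act_pow_eigenvector:
  assumes "x \<in> carrier \<Gamma>" "act \<rho> x w = m *s w"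
  shows "act \<rho> (x [^]\<^bsub>\<Gamma>\<^esub> (j::nat)) w = m ^ j *s w"
proof (induction j)
  case 0
  then show ?case by (simp add: act_one)
next
  case (Suc j)
  have "act \<rho> (x [^]\<^bsub>\<Gamma>\<^esub> Suc j) w = act \<rho> (x [^]\<^bsub>\<Gamma>\<^esub> j) (m *s w)"
    using assms by (simp add: act_mult)
  also have "\<dots> = m ^ Suc j *s w"
    using Suc vec.linear_scale[OF linear_act] by (simp add: mult.commute)
  finally show ?case .
qed

lemma eigenvalue_norm_le_1:
  assumes x: "x \<in> carrier \<Gamma>" and "w \<noteq> 0" and eigen: "act \<rho> x w = m *s w"
  shows "cmod m \<le> 1"
proof (rule ccontr)
  assume "\<not> cmod m \<le> 1"
  obtain k where k: "w $ k \<noteq> 0" using \<open>w \<noteq> 0\<close> by (auto simp: vec_eq_iff)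
  obtain C where C: "\<forall>y\<in>carrier \<Gamma>. cmod (act \<rho> y w $ k) \<le> C"
    using bounded_act_component by blast
  obtain j where "C / cmod (w $ k) < cmod m ^ j"
    using real_arch_pow \<open>\<not> cmod m \<le> 1\<close> by (meson not_le)
  then have "C < cmod (act \<rho> (x [^]\<^bsub>\<Gamma>\<^esub> j) w $ k)"
    using k by (simp add: act_pow_eigenvector[OF x eigen] norm_mult norm_power divide_less_eq)
  with C x show False by (meson \<Gamma>.nat_pow_closed not_le)
qed

lemma eigenvalue_norm_eq_1:
  assumes x: "x \<in> carrier \<Gamma>" and w: "w \<noteq> 0" and eigen: "act \<rho> x w = m *s w"
  shows "cmod m = 1"
proof -
  have inv_x: "inv\<^bsub>\<Gamma>\<^esub> x \<in> carrier \<Gamma>" by (rule \<Gamma>.inv_closed[OF x])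
  have "w = m *s act \<rho> (inv\<^bsub>\<Gamma>\<^esub> x) w"
    using act_inv_act[OF x, of w] eigen vec.linear_scale[OF linear_act] by simp
  then have "m \<noteq> 0" "act \<rho> (inv\<^bsub>\<Gamma>\<^esub> x) w = inverse m *s w"
    using w by (auto simp: vec_eq_iff field_simps)
  then have "cmod (inverse m) \<le> 1" by (intro eigenvalue_norm_le_1[OF inv_x w])
  with \<open>m \<noteq> 0\<close> eigenvalue_norm_le_1[OF x w eigen] show ?thesis
    by (simp add: norm_inverse inverse_le_1_iff)
qed

end

locale maximal_isotropy = compact_GxS1_rep G \<rho>
  for G :: "(real^'m^'m) set" and \<rho> :: "real^'m^'m \<Rightarrow> complex^'n^'n" +
  fixes H :: "((real^'m^'m) \<times> complex) set" and v\<^sub>0 :: "complex^'n"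
  assumes H_maximal: "is_maximal_isotropy_subgroup G \<rho> H"
    and H_eq: "H = isotropy G \<rho> v\<^sub>0"
begin

lemma v\<^sub>0_ne_0: "v\<^sub>0 \<noteq> 0"
  using H_maximal by (auto simp: H_eq isotropy_0 is_maximal_isotropy_subgroup_def)

lemma subgroup_H: "subgroup H \<Gamma>"
  unfolding H_eq by (rule subgroup_isotropy)

lemma H_subset: "H \<subseteq> carrier \<Gamma>"
  using subgroup.subset[OF subgroup_H] .

lemma normalizer_subset: "normalizer \<Gamma> H \<subseteq> carrier \<Gamma>"
  using subgroup.subset[OF \<Gamma>.normalizer_imp_subgroup[OF H_subset]] .

lemma H_normal: "H \<lhd> NH_group G H"
  unfolding NH_group_def by (rule \<Gamma>.subgroup_in_normalizer[OF subgroup_H])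

definition fixed_space :: "(complex^'n) set" where
  "fixed_space = {w. \<forall>h\<in>H. act \<rho> h w = w}"

lemma subspace_fixed_space: "vec.subspace fixed_space"
  using vec.linear_add[OF linear_act] vec.linear_scale[OF linear_act] vec.linear_0[OF linear_act]
  by (auto simp: vec.subspace_def fixed_space_def)

lemma v\<^sub>0_in_fixed_space: "v\<^sub>0 \<in> fixed_space"
  unfolding fixed_space_def by (simp add: H_eq isotropy_def)

lemma isotropy_fixed_vector:
  assumes "w \<in> fixed_space" "w \<noteq> 0"
  shows "isotropy G \<rho> w = H"
proof -
  have "H \<subseteq> isotropy G \<rho> w"
    using assms(1) H_subset by (auto simp: fixed_space_def isotropy_def)
  with H_maximal isotropy_ne_carrier[OF assms(2)] show ?thesis
    by (auto simp: is_maximal_isotropy_subgroup_def is_isotropy_subgroup_def)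
qed

lemma act_normalizer_fixed_space:
  assumes x: "x \<in> normalizer \<Gamma> H" and w: "w \<in> fixed_space"
  shows "act \<rho> x w \<in> fixed_space"
  unfolding fixed_space_def
proof (intro CollectI ballI)
  fix h assume h: "h \<in> H"
  let ?h' = "inv\<^bsub>\<Gamma>\<^esub> x \<otimes>\<^bsub>\<Gamma>\<^esub> h \<otimes>\<^bsub>\<Gamma>\<^esub> x"
  have x_carrier: "x \<in> carrier \<Gamma>" and h_carrier: "h \<in> carrier \<Gamma>"
    using x h normalizer_subset H_subset by auto
  have "x \<in> carrier (NH_group G H)" using x by (simp add: NH_group_def)
  from normal.inv_op_closed1[OF H_normal this h] have "?h' \<in> H"
    by (simp add: NH_group_def \<Gamma>.m_inv_consistent[OF \<Gamma>.normalizer_imp_subgroup[OF H_subset] x])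
  then have "act \<rho> ?h' w = w" and "?h' \<in> carrier \<Gamma>"
    using w H_subset by (auto simp: fixed_space_def)
  moreover have "h \<otimes>\<^bsub>\<Gamma>\<^esub> x = x \<otimes>\<^bsub>\<Gamma>\<^esub> ?h'"
    using x_carrier h_carrier by (simp add: \<Gamma>.m_assoc[symmetric])
  ultimately show "act \<rho> h (act \<rho> x w) = act \<rho> x w"
    using x_carrier h_carrier by (metis act_mult)
qed

lemma normalizer_decomposition:
  assumes x: "x \<in> normalizer \<Gamma> H"
  obtains y m where "y \<in> H" "cmod m = 1" "x = y \<otimes>\<^bsub>\<Gamma>\<^esub> (mat 1, m)" "act \<rho> x v\<^sub>0 = m *s v\<^sub>0"
proof -
  have x_carrier: "x \<in> carrier \<Gamma>" using x normalizer_subset by blast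
  obtain w m where w: "w \<in> fixed_space" "w \<noteq> 0" and eigen: "act \<rho> x w = m *s w"
    using exists_eigenvector_in_invariant_subspace[OF linear_act subspace_fixed_space]
      act_normalizer_fixed_space[OF x] v\<^sub>0_in_fixed_space v\<^sub>0_ne_0 by blast
  have m: "cmod m = 1" by (rule eigenvalue_norm_eq_1[OF x_carrier w(2) eigen])
  then have "m \<noteq> 0" by auto
  define y where "y = (fst x, snd x / m)"
  have x_eq: "x = y \<otimes>\<^bsub>\<Gamma>\<^esub> (mat 1, m)"
    using \<open>m \<noteq> 0\<close> by (simp add: y_def mult_\<Gamma>)
  have "y \<in> carrier \<Gamma>"
    using x_carrier m by (auto simp: y_def carrier_\<Gamma> norm_divide)
  moreover have "act \<rho> y w = w"
    using eigen \<open>m \<noteq> 0\<close> by (auto simp: y_def act_def vec_eq_iff)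
  ultimately have "y \<in> H"
    using isotropy_fixed_vector[OF w] by (auto simp: isotropy_def)
  then have "act \<rho> x v\<^sub>0 = m *s v\<^sub>0"
    using H_subset scalar_in_carrier[of m] m vec.linear_scale[OF linear_act]
    by (auto simp: x_eq act_mult act_scalar H_eq isotropy_def)
  with \<open>y \<in> H\<close> m x_eq show ?thesis by (rule that)
qed

text \<open>\<open>circle_part x\<close> is the scalar by which \<open>x\<close> acts on \<open>v\<^sub>0\<close>, read off at a coordinate
  where \<open>v\<^sub>0\<close> does not vanish; it induces the inverse of \<open>circle_coset\<close>.\<close>

definition nonzero_coord :: 'n where
  "nonzero_coord = (SOME k. v\<^sub>0 $ k \<noteq> 0)"

definition circle_part :: "(real^'m^'m) \<times> complex \<Rightarrow> complex" where
  "circle_part x = act \<rho> x v\<^sub>0 $ nonzero_coord / v\<^sub>0 $ nonzero_coord"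

definition circle_coset :: "complex \<Rightarrow> ((real^'m^'m) \<times> complex) set" where
  "circle_coset c = H #>\<^bsub>\<Gamma>\<^esub> (mat 1, c)"

lemma v\<^sub>0_nonzero_coord: "v\<^sub>0 $ nonzero_coord \<noteq> 0"
  unfolding nonzero_coord_def by (rule someI_ex) (use v\<^sub>0_ne_0 in \<open>auto simp: vec_eq_iff\<close>)

lemma circle_part_eq: "act \<rho> x v\<^sub>0 = m *s v\<^sub>0 \<Longrightarrow> circle_part x = m"
  using v\<^sub>0_nonzero_coord by (simp add: circle_part_def)

lemma r_coset_NH_group: "H #>\<^bsub>NH_group G H\<^esub> x = H #>\<^bsub>\<Gamma>\<^esub> x"
  by (simp add: r_coset_def NH_group_def)

lemma normalizer_circle_part:
  assumes x: "x \<in> normalizer \<Gamma> H"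
  shows "circle_part x \<in> sphere 0 1" and "H #>\<^bsub>\<Gamma>\<^esub> x = circle_coset (circle_part x)"
proof -
  obtain y m where y: "y \<in> H" and m: "cmod m = 1" and x_eq: "x = y \<otimes>\<^bsub>\<Gamma>\<^esub> (mat 1, m)"
    and eigen: "act \<rho> x v\<^sub>0 = m *s v\<^sub>0"
    using normalizer_decomposition[OF x] .
  have part: "circle_part x = m" by (rule circle_part_eq[OF eigen])
  with m show "circle_part x \<in> sphere 0 1" by simp
  have "x \<in> H #>\<^bsub>\<Gamma>\<^esub> (mat 1, m)"
    using y H_subset scalar_in_carrier[of m] m by (auto simp: x_eq intro: \<Gamma>.rcosI)
  then show "H #>\<^bsub>\<Gamma>\<^esub> x = circle_coset (circle_part x)"
    using \<Gamma>.repr_independence[OF _ scalar_in_carrier subgroup_H] m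
    by (simp add: circle_coset_def part)
qed

lemma circle_coset_inj:
  assumes c: "c \<in> sphere 0 1" and d: "d \<in> sphere 0 1" and eq: "circle_coset c = circle_coset d"
  shows "c = d"
proof -
  have "(mat 1, c) \<in> H #>\<^bsub>\<Gamma>\<^esub> (mat 1, d)"
    using eq \<Gamma>.rcos_self[OF scalar_in_carrier[OF c] subgroup_H] by (simp add: circle_coset_def)
  then obtain h where h: "h \<in> H" "(mat 1, c) = h \<otimes>\<^bsub>\<Gamma>\<^esub> (mat 1, d)"
    unfolding r_coset_def by blast
  have "c *s v\<^sub>0 = act \<rho> (h \<otimes>\<^bsub>\<Gamma>\<^esub> (mat 1, d)) v\<^sub>0"
    by (simp add: act_scalar flip: h(2))
  also have "\<dots> = d *s v\<^sub>0"
    using h(1) H_subset scalar_in_carrier[OF d] vec.linear_scale[OF linear_act]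
    by (auto simp: act_mult act_scalar H_eq isotropy_def)
  finally show ?thesis
    using v\<^sub>0_nonzero_coord by (metis mult_cancel_right vector_smult_component)
qed

lemma carrier_NmodH: "carrier (NmodH G H) = circle_coset ` sphere 0 1"
proof -
  have "carrier (NmodH G H) = (\<lambda>x. H #>\<^bsub>\<Gamma>\<^esub> x) ` normalizer \<Gamma> H"
    by (simp add: NmodH_def carrier_FactGroup r_coset_NH_group) (simp add: NH_group_def)
  also have "\<dots> = circle_coset ` sphere 0 1"
    using normalizer_circle_part scalar_in_normalizer[OF _ H_subset]
    by (force simp: circle_coset_def)
  finally show ?thesis .
qed

lemma circle_coset_mult:
  assumes "c \<in> sphere 0 1" "d \<in> sphere 0 1"
  shows "circle_coset (c * d) = circle_coset c \<otimes>\<^bsub>NmodH G H\<^esub> circle_coset d"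
  using normal.rcos_sum[OF H_normal, of "(mat 1, c)" "(mat 1, d)"]
    scalar_in_normalizer[OF assms(1) H_subset] scalar_in_normalizer[OF assms(2) H_subset]
  by (simp add: NmodH_def circle_coset_def r_coset_NH_group)
    (simp add: NH_group_def mult_\<Gamma> set_mult_def)

lemma circle_coset_iso: "circle_coset \<in> iso circle_group (NmodH G H)"
  unfolding iso_def hom_def bij_betw_def inj_on_def
  using carrier_NmodH circle_coset_mult circle_coset_inj by (auto simp: circle_group_def)

lemma continuous_on_circle_part: "continuous_on (normalizer \<Gamma> H) circle_part"
  unfolding circle_part_def
  by (intro continuous_intros continuous_on_subset[OF continuous_on_act_component normalizer_subset])
    (simp_all add: v\<^sub>0_nonzero_coord)

lemma circle_coset_homeomorphic_map: "homeomorphic_map circle_top (NmodH_top G H) circle_coset"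
proof -
  let ?X = "subtopology euclidean (normalizer \<Gamma> H)"
  have "homeomorphic_map circle_top
          (quotient_topology ?X (\<lambda>x. H #>\<^bsub>NH_group G H\<^esub> x) (circle_coset ` topspace circle_top))
          circle_coset"
  proof (rule homeomorphic_map_onto_quotient_topology)
    show "continuous_map circle_top ?X (\<lambda>c. (mat 1, c))"
      unfolding circle_top_def using scalar_in_normalizer[OF _ H_subset]
      by (auto intro!: continuous_intros)
    show "continuous_map ?X circle_top circle_part"
      unfolding circle_top_def using continuous_on_circle_part normalizer_circle_part(1) by auto
    show "H #>\<^bsub>NH_group G H\<^esub> (mat 1, c) = circle_coset c" for c
      by (simp add: r_coset_NH_group circle_coset_def)
    show "H #>\<^bsub>NH_group G H\<^esub> x = circle_coset (circle_part x)" if "x \<in> topspace ?X" for x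
      using that normalizer_circle_part(2) by (simp add: r_coset_NH_group)
    show "inj_on circle_coset (topspace circle_top)"
      using circle_coset_inj by (auto simp: circle_top_def inj_on_def)
  qed
  then show ?thesis
    by (simp add: NmodH_top_def carrier_NmodH circle_top_def)
qed

lemma topspace_NmodH_top: "topspace (NmodH_top G H) = carrier (NmodH G H)"
  using homeomorphic_imp_surjective_map[OF circle_coset_homeomorphic_map]
  by (simp add: carrier_NmodH circle_top_def)

lemma N0_eq_carrier: "N0 G H = carrier (NmodH G H)"
proof -
  have "connected_space circle_top"
    unfolding circle_top_def by (simp add: connected_space_subtopology connected_sphere)
  then have "connected_space (NmodH_top G H)"
    using homeomorphic_connected_space[OF homeomorphic_map_imp_homeomorphic_space]
      circle_coset_homeomorphic_map by blast
  moreover have "H = circle_coset 1"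
    using H_subset by (simp add: circle_coset_def flip: one_\<Gamma>)
  then have "H \<in> carrier (NmodH G H)"
    by (simp add: carrier_NmodH)
  ultimately show ?thesis
    by (simp add: N0_def connected_space_connected_component_set topspace_NmodH_top)
qed

end

theorem lemma3p10:
  fixes G :: "(real^'m^'m) set" and \<rho> :: "real^'m^'m \<Rightarrow> complex^'n^'n"
    and H :: "((real^'m^'m) \<times> complex) set"
  assumes G_group: "group (matgrp G)"
    and G_compact: "compact G"
    and \<rho>_cont: "continuous_on G \<rho>"
    and \<rho>_one: "\<rho> (mat 1) = mat 1"
    and \<rho>_mult: "\<forall>A\<in>G. \<forall>B\<in>G. \<rho> (A ** B) = \<rho> A ** \<rho> B"
    and irred: "complex_irreducible G \<rho>"
    and H_max: "is_maximal_isotropy_subgroup G \<rho> H"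
  shows "((\<exists>f. top_group_iso circle_top circle_group
                 (subtopology (NmodH_top G H) (N0 G H)) ((NmodH G H)\<lparr>carrier := N0 G H\<rparr>) f)
          \<and> (trivial_group (NmodH G H Mod N0 G H)
             \<or> (NmodH G H Mod N0 G H) \<cong> integer_mod_group 2))
       \<or> ((\<exists>f. top_group_iso SU2_top SU2_group
                 (subtopology (NmodH_top G H) (N0 G H)) ((NmodH G H)\<lparr>carrier := N0 G H\<rparr>) f)
          \<and> (\<exists>f. top_group_iso SU2_top SU2_group (NmodH_top G H) (NmodH G H) f))"
proof -
  obtain v\<^sub>0 where "H = isotropy G \<rho> v\<^sub>0"
    using H_max by (auto simp: is_maximal_isotropy_subgroup_def is_isotropy_subgroup_def)
  then interpret maximal_isotropy G \<rho> H v\<^sub>0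
    using G_group G_compact \<rho>_cont \<rho>_one \<rho>_mult H_max
    by (intro maximal_isotropy.intro compact_GxS1_rep.intro GxS1_rep.intro
        compact_GxS1_rep_axioms.intro maximal_isotropy_axioms.intro) auto
  have "top_group_iso circle_top circle_group (NmodH_top G H) (NmodH G H) circle_coset"
    using circle_coset_iso circle_coset_homeomorphic_map by (simp add: top_group_iso_def)
  moreover have "trivial_group (NmodH G H Mod N0 G H)"
    unfolding N0_eq_carrier NmodH_def
    by (rule group.trivial_group_Mod_carrier[OF normal.factorgroup_is_group[OF H_normal]])
  moreover have "subtopology (NmodH_top G H) (N0 G H) = NmodH_top G H"
    by (simp add: N0_eq_carrier flip: topspace_NmodH_top)
  moreover have "(NmodH G H)\<lparr>carrier := N0 G H\<rparr> = NmodH G H"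
    by (simp add: N0_eq_carrier)
  ultimately show ?thesis by auto
qed

end
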